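(* Let $0<R\le\infty$ and let $\varphi$ be a quasiconcave function on $[0,R)$. Then: (i) $S_\varphi$ is bounded from $M_\varphi(0,R)$ to $M_\varphi(0,R)$ if and only if $\varphi$ satisfies the $B$-condition; (ii) $S_\varphi$ is bounded from $L^\infty(0,R)$ to $L^\infty(0,R)$ for every quasiconcave $\varphi$.
   Context: For a measurable a.e. finite function $f$ on $(0,R)$, $f^*$ is its non-increasing rearrangement, $f^*(t)=\inf\{\lambda>0: |\{x:|f(x)|>\lambda\}|\le t\}$, and $f^{**}(t)=\frac1t\int_0^t f^*(s)\,ds$. A function $\varphi\colon[0,R)\to[0,\infty)$ is quasiconcave if $\varphi(t)=0$ iff $t=0$, $\varphi$ is non-decreasing, and $\varphi(t)/t$ is non-increasing on $(0,R)$. It satisfies the $B$-condition if there is $C>0$ with $\frac1t\int_0^t \frac{ds}{\varphi(s)}\le \frac{C}{\varphi(t)}$ for all $t\in(0,R)$. $S_\varphi f(t)=\frac{1}{\varphi(t)}\sup_{0<s<t}\varphi(s)f^*(s)$, $t\in(0,R)$. $M_\varphi(0,R)$ is the set of $f$ with $\|f\|_{M_\varphi}=\sup_{0<s<R}\varphi(s)f^{**}(s)<\infty$. *)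

theory Defs
  imports "HOL-Analysis.Analysis"
begin

definition ivl :: "ereal \<Rightarrow> real set" where
  "ivl R = {x. 0 < x \<and> ereal x < R}"

text \<open>Functions are represented by their absolute values, as maps into [0,\<infinity>].
  A measurable a.e. finite function on (0,R):\<close>
definition meas_ae_finite :: "ereal \<Rightarrow> (real \<Rightarrow> ennreal) \<Rightarrow> bool" where
  "meas_ae_finite R f \<longleftrightarrow>
     f \<in> borel_measurable (restrict_space lebesgue (ivl R)) \<and>
     (AE x in lebesgue. x \<in> ivl R \<longrightarrow> f x < \<infinity>)"

definition fstar :: "ereal \<Rightarrow> (real \<Rightarrow> ennreal) \<Rightarrow> real \<Rightarrow> ennreal" where
  "fstar R f t = Inf (ennreal ` {c::real. 0 < c \<and>
       emeasure lebesgue {x \<in> ivl R. ennreal c < f x} \<le> ennreal t})"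

definition fstarstar :: "ereal \<Rightarrow> (real \<Rightarrow> ennreal) \<Rightarrow> real \<Rightarrow> ennreal" where
  "fstarstar R f t = ennreal (1 / t) * (\<integral>\<^sup>+ s \<in> {0<..<t}. fstar R f s \<partial>lborel)"

definition quasiconcave :: "ereal \<Rightarrow> (real \<Rightarrow> real) \<Rightarrow> bool" where
  "quasiconcave R \<phi> \<longleftrightarrow>
     (\<forall>t. 0 \<le> t \<and> ereal t < R \<longrightarrow> 0 \<le> \<phi> t \<and> (\<phi> t = 0 \<longleftrightarrow> t = 0)) \<and>
     (\<forall>s t. 0 \<le> s \<and> s \<le> t \<and> ereal t < R \<longrightarrow> \<phi> s \<le> \<phi> t) \<and>
     (\<forall>s t. 0 < s \<and> s \<le> t \<and> ereal t < R \<longrightarrow> \<phi> t / t \<le> \<phi> s / s)"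

definition B_condition :: "ereal \<Rightarrow> (real \<Rightarrow> real) \<Rightarrow> bool" where
  "B_condition R \<phi> \<longleftrightarrow> (\<exists>C>0. \<forall>t \<in> ivl R.
     ennreal (1 / t) * (\<integral>\<^sup>+ s \<in> {0<..<t}. ennreal (1 / \<phi> s) \<partial>lborel)
       \<le> ennreal (C / \<phi> t))"

definition S_op :: "ereal \<Rightarrow> (real \<Rightarrow> real) \<Rightarrow> (real \<Rightarrow> ennreal) \<Rightarrow> real \<Rightarrow> ennreal" where
  "S_op R \<phi> f t = ennreal (1 / \<phi> t) * (SUP s \<in> {0<..<t}. ennreal (\<phi> s) * fstar R f s)"

definition M_norm :: "ereal \<Rightarrow> (real \<Rightarrow> real) \<Rightarrow> (real \<Rightarrow> ennreal) \<Rightarrow> ennreal" where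
  "M_norm R \<phi> f = (SUP s \<in> ivl R. ennreal (\<phi> s) * fstarstar R f s)"

definition M_space :: "ereal \<Rightarrow> (real \<Rightarrow> real) \<Rightarrow> (real \<Rightarrow> ennreal) set" where
  "M_space R \<phi> = {f. meas_ae_finite R f \<and> M_norm R \<phi> f < \<infinity>}"

definition Linf_norm :: "ereal \<Rightarrow> (real \<Rightarrow> ennreal) \<Rightarrow> ennreal" where
  "Linf_norm R f = Inf {c. AE x in lebesgue. x \<in> ivl R \<longrightarrow> f x \<le> c}"

definition Linf_space :: "ereal \<Rightarrow> (real \<Rightarrow> ennreal) set" where
  "Linf_space R = {f. meas_ae_finite R f \<and> Linf_norm R f < \<infinity>}"

definition bounded_op ::
  "((real \<Rightarrow> ennreal) \<Rightarrow> (real \<Rightarrow> ennreal)) \<Rightarrow> (real \<Rightarrow> ennreal) set \<Rightarrow> ((real \<Rightarrow> ennreal) \<Rightarrow> ennreal)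
   \<Rightarrow> (real \<Rightarrow> ennreal) set \<Rightarrow> ((real \<Rightarrow> ennreal) \<Rightarrow> ennreal) \<Rightarrow> bool" where
  "bounded_op T X nX Y nY \<longleftrightarrow>
     (\<exists>C::real. 0 \<le> C \<and> (\<forall>f \<in> X. T f \<in> Y \<and> nY (T f) \<le> ennreal C * nX f))"

end

theory Submission
  imports Defs
begin

text \<open>Since f* \<le> f**, the definition of S_\<phi> gives S_\<phi> f \<le> \<parallel>f\<parallel>_M / \<phi>; a function dominated by the
  non-increasing function 1/\<phi> has its rearrangement dominated by it too, so
  \<phi>(t) (S_\<phi> f)**(t) \<le> \<parallel>f\<parallel>_M (\<phi>(t)/t) \<integral>[0,t] 1/\<phi>, which the B-condition bounds by C \<parallel>f\<parallel>_M.
  Conversely, the indicator \<chi> of (0,a) has M_\<phi>-norm at most \<phi>(a), while quasiconcavity gives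
  (S_\<phi> \<chi>)*(s) \<ge> \<phi>(a)/(4\<phi>(s)) for s > a. Boundedness of S_\<phi> therefore bounds \<integral>[a,t] 1/\<phi>
  by 4Ct/\<phi>(t) uniformly in a, and letting a \<rightarrow> 0 yields the B-condition.
  The L^\<infinity> bound is immediate from f* \<le> \<parallel>f\<parallel>_\<infinity> and the monotonicity of \<phi>.\<close>

lemma ivl_pos: "t \<in> ivl R \<Longrightarrow> 0 < t"
  by (simp add: ivl_def)

lemma ivl_downward_closed: "t \<in> ivl R \<Longrightarrow> 0 < s \<Longrightarrow> s \<le> t \<Longrightarrow> s \<in> ivl R"
  unfolding ivl_def by (auto intro: le_less_trans[of _ "ereal _"])

lemma Ioo_subset_ivl: "t \<in> ivl R \<Longrightarrow> 0 \<le> a \<Longrightarrow> {a<..<t} \<subseteq> ivl R"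
  using ivl_downward_closed by force

lemma is_interval_ivl: "is_interval (ivl R)"
  unfolding is_interval_1 ivl_def by (auto intro: le_less_trans[of _ "ereal _"])

lemma ivl_borel [measurable]: "ivl R \<in> sets borel"
  by (rule real_interval_borel_measurable[OF is_interval_ivl])

lemma ivl_obtain_greater:
  assumes "s \<in> ivl R"
  obtains s' where "s' \<in> ivl R" "s < s'" "s' \<le> 2 * s"
proof -
  obtain r where r: "ereal s < ereal r" "ereal r < R"
    using assms ereal_dense2 unfolding ivl_def by blast
  have "min r (2 * s) \<in> ivl R"
    using assms r unfolding ivl_def by (auto intro: le_less_trans[of _ "ereal r"])
  moreover have "s < min r (2 * s)" using assms r by (auto simp: ivl_def)
  ultimately show thesis by (intro that) auto
qed

lemma quasiconcave_pos: "quasiconcave R \<phi> \<Longrightarrow> t \<in> ivl R \<Longrightarrow> 0 < \<phi> t"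
  unfolding quasiconcave_def ivl_def by (metis less_eq_real_def mem_Collect_eq order_less_irrefl)

lemma quasiconcave_mono:
  "quasiconcave R \<phi> \<Longrightarrow> 0 \<le> s \<Longrightarrow> s \<le> t \<Longrightarrow> t \<in> ivl R \<Longrightarrow> \<phi> s \<le> \<phi> t"
  unfolding quasiconcave_def ivl_def by auto

lemma quasiconcave_le_scaled:
  assumes "quasiconcave R \<phi>" "0 < s" "s \<le> t" "t \<in> ivl R"
  shows "\<phi> t \<le> t / s * \<phi> s"
proof -
  have "\<phi> t / t \<le> \<phi> s / s" using assms unfolding quasiconcave_def ivl_def by auto
  then show ?thesis using assms by (simp add: field_simps)
qed

lemma quasiconcave_le_double:
  assumes "quasiconcave R \<phi>" "0 < s" "s \<le> t" "t \<le> 2 * s" "t \<in> ivl R"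
  shows "\<phi> t \<le> 2 * \<phi> s"
proof -
  have "\<phi> t \<le> t / s * \<phi> s" using quasiconcave_le_scaled assms by blast
  also have "\<dots> \<le> 2 * \<phi> s"
    using assms quasiconcave_pos[of R \<phi> s] ivl_downward_closed[of t R s]
    by (intro mult_right_mono) (auto simp: field_simps)
  finally show ?thesis .
qed

lemma borel_measurable_mono_ennreal:
  fixes G :: "real \<Rightarrow> ennreal"
  assumes "mono G"
  shows "G \<in> borel_measurable borel"
proof (rule borel_measurableI_greater)
  fix y
  have "is_interval {x. y < G x}"
    unfolding is_interval_1 using assms by (auto simp: mono_def intro: less_le_trans)
  then show "{x \<in> space borel. y < G x} \<in> sets borel"
    using real_interval_borel_measurable by simp
qed

lemma inverse_quasiconcave_measurable:
  assumes "quasiconcave R \<phi>"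
  shows "(\<lambda>x. ennreal (1 / \<phi> x)) \<in> borel_measurable (restrict_space borel (ivl R))"
proof -
  have [measurable]: "\<phi> \<in> borel_measurable (restrict_space borel (ivl R))"
    using assms by (intro borel_measurable_mono_on_fnc)
      (auto simp: mono_on_def ivl_def intro: quasiconcave_mono)
  show ?thesis by measurable
qed

lemma inverse_quasiconcave_indicator_measurable:
  assumes "quasiconcave R \<phi>" "A \<subseteq> ivl R" "A \<in> sets borel"
  shows "(\<lambda>x. ennreal (1 / \<phi> x) * indicator A x) \<in> borel_measurable borel"
  using measurable_restrict_mono[OF inverse_quasiconcave_measurable[OF assms(1)] assms(2)]
  by (subst (asm) borel_measurable_restrict_space_iff_ennreal) (use assms(3) in auto)

lemma S_op_measurable:
  assumes "quasiconcave R \<phi>"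
  shows "S_op R \<phi> f \<in> borel_measurable (restrict_space lebesgue (ivl R))"
proof -
  define G where "G t = (SUP s \<in> {0<..<t}. ennreal (\<phi> s) * fstar R f s)" for t
  have "mono G" unfolding G_def mono_def by (auto intro!: SUP_subset_mono)
  then have [measurable]: "G \<in> borel_measurable (restrict_space borel (ivl R))"
    by (intro measurable_restrict_space1 borel_measurable_mono_ennreal)
  note [measurable] = inverse_quasiconcave_measurable[OF assms]
  have "S_op R \<phi> f \<in> borel_measurable (restrict_space borel (ivl R))"
    unfolding S_op_def G_def[symmetric] by measurable
  then show ?thesis
    by (rule borel_measurable_subalgebra[rotated 2])
       (auto simp: sets_restrict_space intro!: mono_restrict_space)
qed

lemma fstar_le:
  assumes "0 < c" "emeasure lebesgue {x \<in> ivl R. ennreal c < f x} \<le> ennreal t"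
  shows "fstar R f t \<le> ennreal c"
  unfolding fstar_def using assms by (intro Inf_lower) auto

lemma le_fstar:
  assumes "\<And>c. 0 < c \<Longrightarrow> emeasure lebesgue {x \<in> ivl R. ennreal c < f x} \<le> ennreal t \<Longrightarrow> v \<le> ennreal c"
  shows "v \<le> fstar R f t"
  unfolding fstar_def using assms by (intro Inf_greatest) auto

lemma fstar_le_of_level_sets:
  assumes "\<And>c. 0 < c \<Longrightarrow> d < ennreal c \<Longrightarrow> emeasure lebesgue {x \<in> ivl R. ennreal c < f x} \<le> ennreal t"
  shows "fstar R f t \<le> d"
proof (rule ennreal_le_epsilon)
  fix e :: real assume "d < top" "0 < e"
  then obtain r where r: "d = ennreal r" "0 \<le> r" by (cases d) auto
  with \<open>0 < e\<close> have "fstar R f t \<le> ennreal (r + e)"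
    by (intro fstar_le assms) (auto intro: ennreal_lessI)
  then show "fstar R f t \<le> d + ennreal e"
    using r \<open>0 < e\<close> by (simp add: ennreal_plus)
qed

lemma fstar_antimono: "0 \<le> s \<Longrightarrow> s \<le> t \<Longrightarrow> fstar R f t \<le> fstar R f s"
  unfolding fstar_def by (intro Inf_superset_mono image_mono) (auto intro: order_trans)

lemma fstar_le_fstarstar:
  assumes "0 < s"
  shows "fstar R f s \<le> fstarstar R f s"
proof -
  have "fstar R f s * ennreal s = (\<integral>\<^sup>+ x \<in> {0<..<s}. fstar R f s \<partial>lborel)"
    using assms by (subst nn_integral_cmult_indicator) auto
  also have "\<dots> \<le> (\<integral>\<^sup>+ x \<in> {0<..<s}. fstar R f x \<partial>lborel)"
    by (intro nn_integral_mono) (auto split: split_indicator intro: fstar_antimono)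
  finally have "ennreal (1 / s) * (ennreal s * fstar R f s) \<le> fstarstar R f s"
    unfolding fstarstar_def by (intro mult_left_mono) (auto simp: mult.commute)
  then show ?thesis
    using assms by (simp add: mult.assoc[symmetric] ennreal_mult[symmetric])
qed

lemma fstar_le_antimono_majorant:
  assumes g: "antimono_on (ivl R) g" and fg: "\<And>x. x \<in> ivl R \<Longrightarrow> f x \<le> g x" and s: "s \<in> ivl R"
  shows "fstar R f s \<le> g s"
proof (rule fstar_le_of_level_sets)
  fix c :: real assume "g s < ennreal c"
  then have "{x \<in> ivl R. ennreal c < f x} \<subseteq> {0<..<s}"
    using g fg s by (force simp: ivl_def monotone_on_def not_less dest: le_less_trans)
  then have "emeasure lebesgue {x \<in> ivl R. ennreal c < f x} \<le> emeasure lebesgue {0<..<s}"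
    by (intro emeasure_mono) auto
  then show "emeasure lebesgue {x \<in> ivl R. ennreal c < f x} \<le> ennreal s"
    using s by (simp add: ivl_def)
qed

lemma fstar_ge_of_ge_on_Ioo:
  assumes f: "f \<in> borel_measurable (restrict_space lebesgue (ivl R))"
    and s': "s' \<in> ivl R" "s < s'" and v: "\<And>x. x \<in> {0<..<s'} \<Longrightarrow> v \<le> f x"
  shows "v \<le> fstar R f s"
proof (rule le_fstar, rule ccontr)
  fix c :: real
  assume m: "emeasure lebesgue {x \<in> ivl R. ennreal c < f x} \<le> ennreal s" and "\<not> v \<le> ennreal c"
  then have "{0<..<s'} \<subseteq> {x \<in> ivl R. ennreal c < f x}"
    using v Ioo_subset_ivl[OF s'(1)] by (force simp: not_le intro: less_le_trans)
  moreover have "{x \<in> ivl R. ennreal c < f x} \<in> sets lebesgue"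
    using measurable_sets[OF f, of "{ennreal c<..}"]
    by (auto simp: sets_restrict_space_iff space_restrict_space Int_def conj_commute)
  ultimately have "emeasure lebesgue {0<..<s'} \<le> emeasure lebesgue {x \<in> ivl R. ennreal c < f x}"
    by (rule emeasure_mono)
  with m s' have "ennreal s' \<le> ennreal s" by (auto simp: ivl_def dest: order_trans)
  with s' show False by (auto simp: ivl_def ennreal_le_iff2)
qed

lemma fstar_le_Linf_norm: "fstar R f s \<le> Linf_norm R f"
  unfolding Linf_norm_def
proof (rule Inf_greatest, rule fstar_le_of_level_sets)
  fix d c assume "d \<in> {c. AE x in lebesgue. x \<in> ivl R \<longrightarrow> f x \<le> c}" "d < ennreal c"
  then have "AE x in lebesgue. x \<in> ivl R \<longrightarrow> f x \<le> d" by simp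
  then have "AE x in lebesgue. \<not> (x \<in> ivl R \<and> ennreal c < f x)"
    by eventually_elim (use \<open>d < ennreal c\<close> in \<open>auto dest: le_less_trans\<close>)
  from emeasure_eq_0_AE[OF this]
  show "emeasure lebesgue {x \<in> ivl R. ennreal c < f x} \<le> ennreal s" by simp
qed

lemma indicator_Ioo_measurable:
  "(indicator {0<..<a} :: real \<Rightarrow> ennreal) \<in> borel_measurable (restrict_space lebesgue (ivl R))"
  by (intro measurable_restrict_space1 measurable_completion) measurable

lemma fstar_indicator_Ioo:
  assumes a: "a \<in> ivl R" and s: "s \<in> ivl R"
  shows "fstar R (indicator {0<..<a}) s = (indicator {0<..<a} s :: ennreal)"
proof (rule antisym)
  have "antimono_on (ivl R) (indicator {0<..<a} :: real \<Rightarrow> ennreal)"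
    by (auto simp: monotone_on_def ivl_def split: split_indicator)
  from fstar_le_antimono_majorant[OF this _ s]
  show "fstar R (indicator {0<..<a}) s \<le> indicator {0<..<a} s" by simp
  show "indicator {0<..<a} s \<le> fstar R (indicator {0<..<a}) s"
  proof (cases "s < a")
    case True
    then show ?thesis
      using a s by (auto intro!: fstar_ge_of_ge_on_Ioo[OF indicator_Ioo_measurable a] simp: ivl_def)
  qed (simp add: not_less)
qed

lemma fstarstar_indicator_Ioo:
  assumes a: "a \<in> ivl R" and t: "t \<in> ivl R"
  shows "fstarstar R (indicator {0<..<a}) t = ennreal (min a t / t)"
proof -
  have "(\<integral>\<^sup>+ s \<in> {0<..<t}. fstar R (indicator {0<..<a}) s \<partial>lborel)
      = (\<integral>\<^sup>+ s. indicator ({0<..<a} \<inter> {0<..<t}) s \<partial>lborel)"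
    by (intro nn_integral_cong)
       (auto simp: fstar_indicator_Ioo[OF a ivl_downward_closed[OF t]] split: split_indicator)
  also have "{0<..<a} \<inter> {0<..<t} = {0<..<min a t}" by auto
  also have "(\<integral>\<^sup>+ s. indicator {0<..<min a t} s \<partial>lborel) = ennreal (min a t)"
    using a t by (simp add: ivl_def)
  finally show ?thesis
    using a t by (simp add: fstarstar_def ivl_def ennreal_mult[symmetric])
qed

lemma M_norm_indicator_Ioo_le:
  assumes q: "quasiconcave R \<phi>" and a: "a \<in> ivl R"
  shows "M_norm R \<phi> (indicator {0<..<a}) \<le> ennreal (\<phi> a)"
  unfolding M_norm_def
proof (rule SUP_least)
  fix t assume t: "t \<in> ivl R"
  have "\<phi> t * (min a t / t) \<le> \<phi> a"
  proof (cases "t \<le> a")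
    case True
    then show ?thesis using quasiconcave_mono[OF q _ True a] t by (simp add: ivl_def)
  next
    case False
    then have "\<phi> t \<le> t / a * \<phi> a" using quasiconcave_le_scaled[OF q _ _ t] a by (simp add: ivl_def)
    then show ?thesis using False a t by (simp add: ivl_def field_simps)
  qed
  moreover have "0 \<le> \<phi> t" using quasiconcave_pos[OF q t] by simp
  ultimately show "ennreal (\<phi> t) * fstarstar R (indicator {0<..<a}) t \<le> ennreal (\<phi> a)"
    using a t ivl_pos[OF a] ivl_pos[OF t]
    by (simp add: fstarstar_indicator_Ioo ennreal_mult[symmetric] ennreal_leI)
qed

lemma indicator_Ioo_in_M_space:
  assumes "quasiconcave R \<phi>" "a \<in> ivl R"
  shows "indicator {0<..<a} \<in> M_space R \<phi>"
  using M_norm_indicator_Ioo_le[OF assms] indicator_Ioo_measurable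
  by (auto simp: M_space_def meas_ae_finite_def split: split_indicator intro: le_less_trans)

lemma S_op_le_M_norm:
  assumes t: "t \<in> ivl R"
  shows "S_op R \<phi> f t \<le> ennreal (1 / \<phi> t) * M_norm R \<phi> f"
  unfolding S_op_def
proof (intro mult_left_mono SUP_least)
  fix s assume s: "s \<in> {0<..<t}"
  have "ennreal (\<phi> s) * fstar R f s \<le> ennreal (\<phi> s) * fstarstar R f s"
    using s by (intro mult_left_mono fstar_le_fstarstar) auto
  also have "\<dots> \<le> M_norm R \<phi> f"
    unfolding M_norm_def using s ivl_downward_closed[OF t] by (intro SUP_upper) auto
  finally show "ennreal (\<phi> s) * fstar R f s \<le> M_norm R \<phi> f" .
qed auto

lemma S_op_le_Linf_norm:
  assumes q: "quasiconcave R \<phi>" and t: "t \<in> ivl R"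
  shows "S_op R \<phi> f t \<le> Linf_norm R f"
proof -
  have "(SUP s \<in> {0<..<t}. ennreal (\<phi> s) * fstar R f s) \<le> ennreal (\<phi> t) * Linf_norm R f"
    using t by (intro SUP_least mult_mono ennreal_leI quasiconcave_mono[OF q] fstar_le_Linf_norm) auto
  then have "S_op R \<phi> f t \<le> ennreal (1 / \<phi> t) * (ennreal (\<phi> t) * Linf_norm R f)"
    unfolding S_op_def by (rule mult_left_mono) simp
  then show ?thesis
    using quasiconcave_pos[OF q t] by (simp add: mult.assoc[symmetric] ennreal_mult[symmetric])
qed

lemma S_op_indicator_Ioo_ge:
  assumes q: "quasiconcave R \<phi>" and a: "a \<in> ivl R" and x: "x \<in> ivl R"
  shows "ennreal (min (\<phi> a) (\<phi> x) / (2 * \<phi> x)) \<le> S_op R \<phi> (indicator {0<..<a}) x"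
proof -
  define b where "b = min a x / 2"
  have m: "min a x \<in> ivl R" by (simp add: a x min_def)
  have b: "b \<in> ivl R" "0 < b" "b < x" "b < a"
    using ivl_pos[OF a] ivl_pos[OF x] ivl_downward_closed[OF x, of b] by (auto simp: b_def)
  have "min (\<phi> a) (\<phi> x) \<le> \<phi> (min a x)" by (simp add: min_def)
  also have "\<phi> (min a x) \<le> 2 * \<phi> b"
    using quasiconcave_le_double[OF q _ _ _ m] b by (simp add: b_def)
  finally have "ennreal (min (\<phi> a) (\<phi> x) / (2 * \<phi> x)) \<le> ennreal (1 / \<phi> x) * ennreal (\<phi> b)"
    using quasiconcave_pos[OF q x] quasiconcave_pos[OF q b(1)]
    by (simp add: ennreal_mult[symmetric] ennreal_leI field_simps)
  also have "ennreal (\<phi> b) = ennreal (\<phi> b) * fstar R (indicator {0<..<a}) b"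
    using b by (simp add: fstar_indicator_Ioo[OF a b(1)])
  also have "\<dots> \<le> (SUP s \<in> {0<..<x}. ennreal (\<phi> s) * fstar R (indicator {0<..<a}) s)"
    using b by (intro SUP_upper) auto
  finally show ?thesis by (simp add: S_op_def mult_left_mono)
qed

lemma fstar_S_op_indicator_Ioo_ge:
  assumes q: "quasiconcave R \<phi>" and a: "a \<in> ivl R" and s: "s \<in> ivl R" and "a < s"
  shows "ennreal (\<phi> a / (4 * \<phi> s)) \<le> fstar R (S_op R \<phi> (indicator {0<..<a})) s"
proof -
  obtain s' where s': "s' \<in> ivl R" "s < s'" "s' \<le> 2 * s" using ivl_obtain_greater[OF s] .
  have "\<phi> a / (4 * \<phi> s) \<le> min (\<phi> a) (\<phi> x) / (2 * \<phi> x)" if x: "x \<in> {0<..<s'}" for x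
  proof -
    have xi: "x \<in> ivl R" using x ivl_downward_closed[OF s'(1)] by auto
    have "\<phi> x \<le> 2 * \<phi> s"
      using quasiconcave_mono[OF q _ _ s'(1), of x] quasiconcave_le_double[OF q _ _ s'(3) s'(1)]
        x s' ivl_pos[OF s] by force
    moreover have "\<phi> a \<le> \<phi> s" using quasiconcave_mono[OF q _ _ s] ivl_pos[OF a] \<open>a < s\<close> by simp
    ultimately show ?thesis
      using quasiconcave_pos[OF q a] quasiconcave_pos[OF q xi] quasiconcave_pos[OF q s]
      by (auto simp: min_def field_simps)
  qed
  then show ?thesis
    by (intro fstar_ge_of_ge_on_Ioo[OF S_op_measurable[OF q] s'(1,2)] order.trans[OF _ S_op_indicator_Ioo_ge[OF q a]] ennreal_leI)
       (auto dest: ivl_downward_closed[OF s'(1)])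
qed

lemma set_nn_integral_Ioo_le_of_truncations:
  fixes g :: "real \<Rightarrow> ennreal"
  assumes g: "g \<in> borel_measurable (restrict_space borel {0<..<t})"
    and le: "\<And>a. 0 < a \<Longrightarrow> a < t \<Longrightarrow> (\<integral>\<^sup>+ x \<in> {a<..<t}. g x \<partial>lborel) \<le> K"
  shows "(\<integral>\<^sup>+ x \<in> {0<..<t}. g x \<partial>lborel) \<le> K"
proof (cases "0 < t")
  case t: True
  define G where "G x = g x * indicator {0<..<t} x" for x
  have [measurable]: "G \<in> borel_measurable borel"
    using g unfolding G_def by (subst (asm) borel_measurable_restrict_space_iff_ennreal) auto
  have integral_eq: "(\<integral>\<^sup>+ x \<in> A. g x \<partial>lborel) = emeasure (density lborel G) A"
    if "A \<subseteq> {0<..<t}" "A \<in> sets borel" for A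
    using that by (auto simp: emeasure_density G_def intro!: nn_integral_cong split: split_indicator)
  define A where "A n = {t / (real n + 2)<..<t}" for n
  have bounds: "0 < t / (real n + 2)" "t / (real n + 2) < t" for n
    using t by (auto simp: field_simps add_pos_nonneg)
  have A_sub: "A n \<subseteq> {0<..<t}" for n
    using bounds[of n] by (auto simp: A_def)
  have "incseq A"
  proof (rule incseq_SucI)
    fix n
    have "t / (real n + 3) \<le> t / (real n + 2)" using t by (intro divide_left_mono) auto
    then show "A n \<subseteq> A (Suc n)" by (auto simp: A_def add.commute[of 1] add.assoc)
  qed
  have "(\<Union>n. A n) = {0<..<t}"
  proof (intro antisym subsetI)
    fix x assume x: "x \<in> {0<..<t}"
    obtain n :: nat where "t / x < real n" using reals_Archimedean2 by blast
    with x have "t / (real n + 2) < x" by (simp add: field_simps)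
    with x show "x \<in> (\<Union>n. A n)" by (auto simp: A_def)
  qed (use A_sub in blast)
  then have "(\<integral>\<^sup>+ x \<in> {0<..<t}. g x \<partial>lborel) = emeasure (density lborel G) (\<Union>n. A n)"
    by (simp add: integral_eq)
  also have "\<dots> = (SUP n. emeasure (density lborel G) (A n))"
    using \<open>incseq A\<close> by (intro SUP_emeasure_incseq[symmetric]) (auto simp: A_def[abs_def])
  also have "\<dots> \<le> K"
    using A_sub bounds by (intro SUP_least) (auto simp: A_def integral_eq[symmetric] intro!: le)
  finally show ?thesis .
qed simp

lemma fstarstar_S_op_le:
  assumes q: "quasiconcave R \<phi>" and t: "t \<in> ivl R"
  shows "fstarstar R (S_op R \<phi> f) t
    \<le> M_norm R \<phi> f * (ennreal (1 / t) * (\<integral>\<^sup>+ s \<in> {0<..<t}. ennreal (1 / \<phi> s) \<partial>lborel))"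
proof -
  have "antimono_on (ivl R) (\<lambda>x. M_norm R \<phi> f * ennreal (1 / \<phi> x))"
    using quasiconcave_pos[OF q] quasiconcave_mono[OF q]
    by (auto simp: monotone_on_def ivl_def intro!: mult_left_mono ennreal_leI divide_left_mono)
  then have fstar_le: "fstar R (S_op R \<phi> f) s \<le> M_norm R \<phi> f * ennreal (1 / \<phi> s)" if "s \<in> ivl R" for s
    using S_op_le_M_norm that by (intro fstar_le_antimono_majorant) (auto simp: mult.commute)
  have "(\<integral>\<^sup>+ s \<in> {0<..<t}. fstar R (S_op R \<phi> f) s \<partial>lborel)
      \<le> (\<integral>\<^sup>+ s. M_norm R \<phi> f * (ennreal (1 / \<phi> s) * indicator {0<..<t} s) \<partial>lborel)"
    using fstar_le ivl_downward_closed[OF t]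
    by (intro nn_integral_mono) (auto simp: mult.assoc split: split_indicator)
  also have "\<dots> = M_norm R \<phi> f * (\<integral>\<^sup>+ s \<in> {0<..<t}. ennreal (1 / \<phi> s) \<partial>lborel)"
    using inverse_quasiconcave_indicator_measurable[OF q Ioo_subset_ivl[OF t]]
    by (intro nn_integral_cmult) auto
  finally have "ennreal (1 / t) * (\<integral>\<^sup>+ s \<in> {0<..<t}. fstar R (S_op R \<phi> f) s \<partial>lborel)
      \<le> ennreal (1 / t) * (M_norm R \<phi> f * (\<integral>\<^sup>+ s \<in> {0<..<t}. ennreal (1 / \<phi> s) \<partial>lborel))"
    by (rule mult_left_mono) simp
  then show ?thesis
    unfolding fstarstar_def by (simp add: mult.left_commute)
qed

lemma S_op_bounded_M_space_if_B_condition: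
  assumes q: "quasiconcave R \<phi>" and B: "B_condition R \<phi>"
  shows "bounded_op (S_op R \<phi>) (M_space R \<phi>) (M_norm R \<phi>) (M_space R \<phi>) (M_norm R \<phi>)"
proof -
  obtain C where C: "0 < C" and CB: "\<And>t. t \<in> ivl R \<Longrightarrow>
      ennreal (1 / t) * (\<integral>\<^sup>+ s \<in> {0<..<t}. ennreal (1 / \<phi> s) \<partial>lborel) \<le> ennreal (C / \<phi> t)"
    using B unfolding B_condition_def by auto
  have norm_le: "M_norm R \<phi> (S_op R \<phi> f) \<le> ennreal C * M_norm R \<phi> f" for f
    unfolding M_norm_def[of R \<phi> "S_op R \<phi> f"]
  proof (rule SUP_least)
    fix t assume t: "t \<in> ivl R"
    have "ennreal (\<phi> t) * fstarstar R (S_op R \<phi> f) t \<le> ennreal (\<phi> t) * (M_norm R \<phi> f * ennreal (C / \<phi> t))"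
      by (intro mult_left_mono order.trans[OF fstarstar_S_op_le[OF q t]] CB[OF t]) auto
    also have "\<dots> = ennreal C * M_norm R \<phi> f"
      using quasiconcave_pos[OF q t] C
      by (simp add: ennreal_mult[symmetric] mult.left_commute[of "ennreal (\<phi> t)"] mult.commute)
    finally show "ennreal (\<phi> t) * fstarstar R (S_op R \<phi> f) t \<le> ennreal C * M_norm R \<phi> f" .
  qed
  have "S_op R \<phi> f \<in> M_space R \<phi>" if f: "f \<in> M_space R \<phi>" for f
  proof -
    have "M_norm R \<phi> f < \<infinity>" using f by (simp add: M_space_def)
    then have "S_op R \<phi> f x < \<infinity>" if "x \<in> ivl R" for x
      by (intro le_less_trans[OF S_op_le_M_norm[OF that]]) (simp add: ennreal_mult_less_top)
    moreover have "M_norm R \<phi> (S_op R \<phi> f) < \<infinity>"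
      using \<open>M_norm R \<phi> f < \<infinity>\<close>
      by (intro le_less_trans[OF norm_le]) (simp add: ennreal_mult_less_top)
    ultimately show ?thesis
      by (auto simp: M_space_def meas_ae_finite_def S_op_measurable[OF q] intro!: AE_I2)
  qed
  with norm_le C show ?thesis
    unfolding bounded_op_def by (intro exI[of _ C]) auto
qed

lemma S_op_bounded_Linf:
  assumes q: "quasiconcave R \<phi>"
  shows "bounded_op (S_op R \<phi>) (Linf_space R) (Linf_norm R) (Linf_space R) (Linf_norm R)"
  unfolding bounded_op_def
proof (intro exI[of _ 1] conjI ballI)
  fix f assume f: "f \<in> Linf_space R"
  have norm_le: "Linf_norm R (S_op R \<phi> f) \<le> Linf_norm R f"
    unfolding Linf_norm_def[of R "S_op R \<phi> f"]
    using S_op_le_Linf_norm[OF q] by (intro Inf_lower AE_I2) auto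
  then show "Linf_norm R (S_op R \<phi> f) \<le> ennreal 1 * Linf_norm R f" by simp
  show "S_op R \<phi> f \<in> Linf_space R"
    using f norm_le S_op_le_Linf_norm[OF q]
    by (auto simp: Linf_space_def meas_ae_finite_def S_op_measurable[OF q] intro!: AE_I2
             intro: le_less_trans)
qed simp

lemma truncated_integral_inverse_le_of_S_op_bounded:
  assumes q: "quasiconcave R \<phi>" and "0 \<le> C"
    and bounded: "\<And>f. f \<in> M_space R \<phi> \<Longrightarrow> M_norm R \<phi> (S_op R \<phi> f) \<le> ennreal C * M_norm R \<phi> f"
    and t: "t \<in> ivl R" and a: "0 < a" "a < t"
  shows "(\<integral>\<^sup>+ s \<in> {a<..<t}. ennreal (1 / \<phi> s) \<partial>lborel) \<le> ennreal (4 * C * t / \<phi> t)"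
proof -
  define J where "J = (\<integral>\<^sup>+ s \<in> {a<..<t}. ennreal (1 / \<phi> s) \<partial>lborel)"
  define F where "F = S_op R \<phi> (indicator {0<..<a})"
  have ai: "a \<in> ivl R" using ivl_downward_closed[OF t] a by auto
  have pa: "0 < \<phi> a" and pt: "0 < \<phi> t" using quasiconcave_pos[OF q] ai t by auto
  have "ennreal (\<phi> a / 4) * J
      = (\<integral>\<^sup>+ s. ennreal (\<phi> a / 4) * (ennreal (1 / \<phi> s) * indicator {a<..<t} s) \<partial>lborel)"
    unfolding J_def using inverse_quasiconcave_indicator_measurable[OF q Ioo_subset_ivl[OF t]] a
    by (intro nn_integral_cmult[symmetric]) auto
  also have "\<dots> \<le> (\<integral>\<^sup>+ s \<in> {0<..<t}. fstar R F s \<partial>lborel)"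
  proof (intro nn_integral_mono)
    fix s
    show "ennreal (\<phi> a / 4) * (ennreal (1 / \<phi> s) * indicator {a<..<t} s) \<le> fstar R F s * indicator {0<..<t} s"
    proof (cases "s \<in> {a<..<t}")
      case True
      then have si: "s \<in> ivl R" using ivl_downward_closed[OF t, of s] a by auto
      then have "ennreal (\<phi> a / 4) * ennreal (1 / \<phi> s) = ennreal (\<phi> a / (4 * \<phi> s))"
        using pa quasiconcave_pos[OF q si] by (simp add: ennreal_mult[symmetric])
      also have "\<dots> \<le> fstar R F s"
        unfolding F_def using True by (intro fstar_S_op_indicator_Ioo_ge[OF q ai si]) auto
      finally show ?thesis using True a by simp
    qed simp
  qed
  finally have I: "ennreal (\<phi> a / 4) * J \<le> (\<integral>\<^sup>+ s \<in> {0<..<t}. fstar R F s \<partial>lborel)" .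
  have "ennreal (\<phi> t / t * (\<phi> a / 4)) * J = ennreal (\<phi> t) * (ennreal (1 / t) * (ennreal (\<phi> a / 4) * J))"
    using pt pa ivl_pos[OF t] by (simp add: ennreal_mult[symmetric] mult.assoc[symmetric])
  also have "\<dots> \<le> ennreal (\<phi> t) * fstarstar R F t"
    unfolding fstarstar_def by (intro mult_left_mono I) auto
  also have "\<dots> \<le> M_norm R \<phi> F"
    unfolding M_norm_def using t by (intro SUP_upper)
  also have "\<dots> \<le> ennreal C * ennreal (\<phi> a)"
    unfolding F_def using bounded[OF indicator_Ioo_in_M_space[OF q ai]]
    by (rule order.trans) (intro mult_left_mono M_norm_indicator_Ioo_le[OF q ai]; simp)
  also have "\<dots> = ennreal (\<phi> t / t * (\<phi> a / 4)) * ennreal (4 * C * t / \<phi> t)"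
    using pt pa ivl_pos[OF t] \<open>0 \<le> C\<close> by (simp add: ennreal_mult[symmetric])
  finally show ?thesis
    unfolding J_def using pt pa ivl_pos[OF t] by (subst (asm) ennreal_mult_le_mult_iff) auto
qed

lemma B_condition_if_S_op_bounded_M_space:
  assumes q: "quasiconcave R \<phi>"
    and bd: "bounded_op (S_op R \<phi>) (M_space R \<phi>) (M_norm R \<phi>) (M_space R \<phi>) (M_norm R \<phi>)"
  shows "B_condition R \<phi>"
proof -
  obtain C where C: "0 \<le> C"
    and bounded: "\<And>f. f \<in> M_space R \<phi> \<Longrightarrow> M_norm R \<phi> (S_op R \<phi> f) \<le> ennreal C * M_norm R \<phi> f"
    using bd unfolding bounded_op_def by blast
  have "ennreal (1 / t) * (\<integral>\<^sup>+ s \<in> {0<..<t}. ennreal (1 / \<phi> s) \<partial>lborel) \<le> ennreal ((4 * C + 1) / \<phi> t)"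
    if t: "t \<in> ivl R" for t
  proof -
    have "(\<integral>\<^sup>+ s \<in> {0<..<t}. ennreal (1 / \<phi> s) \<partial>lborel) \<le> ennreal (4 * C * t / \<phi> t)"
      using measurable_restrict_mono[OF inverse_quasiconcave_measurable[OF q] Ioo_subset_ivl[OF t order.refl]]
        truncated_integral_inverse_le_of_S_op_bounded[OF q C bounded t]
      by (rule set_nn_integral_Ioo_le_of_truncations)
    then have "ennreal (1 / t) * (\<integral>\<^sup>+ s \<in> {0<..<t}. ennreal (1 / \<phi> s) \<partial>lborel) \<le> ennreal (4 * C / \<phi> t)"
      using ivl_pos[OF t] quasiconcave_pos[OF q t] C
      by (auto simp: ennreal_mult[symmetric] dest: mult_left_mono[of _ _ "ennreal (1 / t)"])
    also have "\<dots> \<le> ennreal ((4 * C + 1) / \<phi> t)"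
      using quasiconcave_pos[OF q t] by (intro ennreal_leI divide_right_mono) auto
    finally show ?thesis .
  qed
  then show ?thesis
    unfolding B_condition_def using C by (intro exI[of _ "4 * C + 1"]) auto
qed

theorem lemma3p2:
  fixes R :: ereal and \<phi> :: "real \<Rightarrow> real"
  assumes "0 < R" and "quasiconcave R \<phi>"
  shows "(bounded_op (S_op R \<phi>) (M_space R \<phi>) (M_norm R \<phi>) (M_space R \<phi>) (M_norm R \<phi>)
            \<longleftrightarrow> B_condition R \<phi>)
       \<and> bounded_op (S_op R \<phi>) (Linf_space R) (Linf_norm R) (Linf_space R) (Linf_norm R)"
  using S_op_bounded_M_space_if_B_condition[OF assms(2)] B_condition_if_S_op_bounded_M_space[OF assms(2)]
    S_op_bounded_Linf[OF assms(2)]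
  by blast

end
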